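(* Let $n\ge1$, let $V$ be a real symmetric positive-semidefinite $2n\times2n$ matrix, let $H$ be a real symmetric positive-definite $2n\times 2n$ matrix, and let $G$ be either $SL(2n)$ or $Sp(2n)$. Then \[ \inf_{X\in G}\operatorname{tr}(XVX^TH)=\lim_{\epsilon\to0^+}\ \inf_{X\in G}\operatorname{tr}\big(X(V+\epsilon\mathbb{I}_{2n})X^TH\big). \]
   Context: $SL(2n)$ is the group of real $2n\times2n$ matrices of determinant $1$; $Sp(2n)=\{S\in\mathbb{R}^{2n\times 2n}: S^TJS=J\}$ with $J=\begin{bmatrix}0 & \mathbb{I}_n\\ -\mathbb{I}_n & 0\end{bmatrix}$. *)

theory Defs
  imports "HOL-Analysis.Analysis"
begin

text \<open>Matrices of size 2n x 2n are indexed by the type 'n + 'n, where CARD('n) = n;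
  the first block of n coordinates is Inl, the second is Inr.\<close>

type_synonym 'n sqmat = "real ^ ('n + 'n) ^ ('n + 'n)"

definition symJ :: "'n::finite sqmat" where
  "symJ = (\<chi> i j. (case (i, j) of
      (Inl a, Inr b) \<Rightarrow> (if a = b then 1 else 0)
    | (Inr a, Inl b) \<Rightarrow> (if a = b then -1 else 0)
    | _ \<Rightarrow> 0))"

definition SL_grp :: "'n::finite sqmat set" where
  "SL_grp = {S. det S = 1}"

definition Sp_grp :: "'n::finite sqmat set" where
  "Sp_grp = {S. transpose S ** symJ ** S = symJ}"

definition psd_mat :: "'n::finite sqmat \<Rightarrow> bool" where
  "psd_mat A \<longleftrightarrow> transpose A = A \<and> (\<forall>x. 0 \<le> x \<bullet> (A *v x))"

definition pd_mat :: "'n::finite sqmat \<Rightarrow> bool" where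
  "pd_mat A \<longleftrightarrow> transpose A = A \<and> (\<forall>x. x \<noteq> 0 \<longrightarrow> 0 < x \<bullet> (A *v x))"

end

theory Submission
  imports Defs
begin

(* Writing K X = X^T H X, cyclicity of the trace turns the objective into
   tr(X (V + e I) X^T H) = tr(V K X) + e tr(K X), where K X is positive semidefinite.
   The trace of a product of two positive semidefinite matrices is nonnegative (peel off
   rank-one terms r r^T / d by symmetric Gaussian elimination), so both terms are
   nonnegative, and the infimum of a family g + e h with h >= 0 tends to inf g as e -> 0+. *)

definition outer_prod :: "real^'m \<Rightarrow> real^'n \<Rightarrow> real^'n^'m" where
  "outer_prod u v = (\<chi> i j. u $ i * v $ j)"

lemma outer_prod_mult_vec: "outer_prod u v *v x = (v \<bullet> x) *\<^sub>R u"
  by (simp add: outer_prod_def matrix_vector_mult_def inner_vec_def vec_eq_iff sum_distrib_left mult_ac)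

lemma trace_mult_outer_prod:
  fixes A :: "real^'m^'n"
  shows "trace (A ** outer_prod u v) = v \<bullet> (A *v u)"
  by (simp add: trace_def outer_prod_def matrix_matrix_mult_def matrix_vector_mult_def inner_vec_def
      sum_distrib_left mult_ac)

lemma trace_scaleR: "trace (c *\<^sub>R A) = c * trace (A :: real^'n^'n)"
  by (simp add: trace_def sum_distrib_left)

lemma trace_add_scaled_id_mult:
  fixes A B :: "real^'n^'n"
  shows "trace ((A + c *\<^sub>R mat 1) ** B) = trace (A ** B) + c * trace B"
proof -
  have "(A + C) ** B = A ** B + C ** B" for C :: "real^'n^'n"
    by (simp add: matrix_matrix_mult_def vec_eq_iff sum.distrib distrib_right)
  then have "(A + c *\<^sub>R mat 1) ** B = A ** B + c *\<^sub>R B"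
    by (simp add: scalar_matrix_assoc[symmetric])
  then show ?thesis
    by (simp add: trace_add trace_scaleR)
qed

lemma inner_symmetric_matrix:
  fixes B :: "real^'n^'n"
  assumes "transpose B = B"
  shows "x \<bullet> (B *v y) = y \<bullet> (B *v x)"
  by (metis assms dot_lmul_matrix inner_commute vector_transpose_matrix)

lemma matrix_vector_mult_nth: "(B *v x) $ a = B $ a \<bullet> x"
  by (simp add: matrix_vector_mult_def inner_vec_def)

lemma quadratic_form_axis: "axis a 1 \<bullet> (B *v axis a 1) = B $ a $ a"
  by (simp add: inner_axis' matrix_vector_mult_nth inner_axis)

lemma quadratic_form_add_axis:
  fixes B :: "real^'n^'n"
  assumes "transpose B = B"
  shows "(x + t *\<^sub>R axis a 1) \<bullet> (B *v (x + t *\<^sub>R axis a 1))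
       = x \<bullet> (B *v x) + 2 * t * (B $ a \<bullet> x) + t\<^sup>2 * B $ a $ a"
proof -
  have "x \<bullet> (B *v axis a 1) = axis a 1 \<bullet> (B *v x)"
    by (rule inner_symmetric_matrix[OF assms])
  also have "\<dots> = B $ a \<bullet> x"
    by (simp add: inner_axis' matrix_vector_mult_nth)
  finally have "x \<bullet> (B *v axis a 1) = B $ a \<bullet> x" .
  then show ?thesis
    by (simp add: quadratic_form_axis inner_axis inner_axis' matrix_vector_mult_nth
        inner_add_left inner_add_right algebra_simps power2_eq_square)
qed

definition psd_matrix :: "real^'n^'n \<Rightarrow> bool" where
  "psd_matrix A \<longleftrightarrow> transpose A = A \<and> (\<forall>x. 0 \<le> x \<bullet> (A *v x))"

lemma psd_matrix_diag_nonneg: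
  assumes "psd_matrix B"
  shows "0 \<le> B $ a $ a"
  using assms unfolding psd_matrix_def by (metis quadratic_form_axis)

lemma psd_matrix_zero_diag_imp_zero_row:
  assumes "psd_matrix B" and "B $ a $ a = 0"
  shows "B $ a = 0"
proof (rule ccontr)
  assume "B $ a \<noteq> 0"
  then obtain j where "B $ a $ j \<noteq> 0"
    by (auto simp: vec_eq_iff)
  define t where "t = - (B $ j $ j + 1) / (2 * (B $ a $ j))"
  have sym: "transpose B = B" and nonneg: "\<And>x. 0 \<le> x \<bullet> (B *v x)"
    using assms(1) by (auto simp: psd_matrix_def)
  have "(axis j 1 + t *\<^sub>R axis a 1) \<bullet> (B *v (axis j 1 + t *\<^sub>R axis a 1))
      = B $ j $ j + 2 * t * B $ a $ j"
    using assms(2) by (simp add: quadratic_form_add_axis[OF sym] quadratic_form_axis inner_axis)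
  also have "\<dots> = -1"
    using \<open>B $ a $ j \<noteq> 0\<close> by (simp add: t_def field_simps)
  finally show False
    using nonneg[of "axis j 1 + t *\<^sub>R axis a 1"] by simp
qed

lemma psd_matrix_eliminate:
  assumes "psd_matrix B" and pos: "0 < B $ a $ a"
  shows "psd_matrix (B - (1 / B $ a $ a) *\<^sub>R outer_prod (B $ a) (B $ a))"
proof -
  let ?d = "B $ a $ a" and ?r = "B $ a"
  have sym: "transpose B = B" and nonneg: "\<And>x. 0 \<le> x \<bullet> (B *v x)"
    using assms(1) by (auto simp: psd_matrix_def)
  have "0 \<le> x \<bullet> ((B - (1 / ?d) *\<^sub>R outer_prod ?r ?r) *v x)" for x
  proof -
    let ?t = "- (?r \<bullet> x) / ?d"
    have "0 \<le> (x + ?t *\<^sub>R axis a 1) \<bullet> (B *v (x + ?t *\<^sub>R axis a 1))"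
      by (rule nonneg)
    also have "\<dots> = x \<bullet> (B *v x) - (?r \<bullet> x)\<^sup>2 / ?d"
      unfolding quadratic_form_add_axis[OF sym] using pos by (simp add: field_simps power2_eq_square)
    also have "\<dots> = x \<bullet> ((B - (1 / ?d) *\<^sub>R outer_prod ?r ?r) *v x)"
      by (simp add: matrix_vector_mult_diff_rdistrib scaleR_matrix_vector_assoc[symmetric]
          outer_prod_mult_vec inner_diff_right inner_commute power2_eq_square)
    finally show ?thesis .
  qed
  moreover have "transpose (B - (1 / ?d) *\<^sub>R outer_prod ?r ?r) = B - (1 / ?d) *\<^sub>R outer_prod ?r ?r"
    using sym by (simp add: transpose_def outer_prod_def vec_eq_iff mult.commute)
  ultimately show ?thesis
    by (simp add: psd_matrix_def)
qed

lemma trace_mult_psd_nonneg_supported: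
  assumes A: "psd_matrix A"
    and "finite S" and "psd_matrix B" and "\<forall>i. i \<notin> S \<longrightarrow> B $ i = 0"
  shows "0 \<le> trace (A ** B)"
  using assms(2-4)
proof (induction S arbitrary: B rule: finite_induct)
  case empty
  then have "B = 0"
    by (simp add: vec_eq_iff)
  then show ?case
    by (simp add: trace_def)
next
  case (insert a S)
  have sym: "transpose B = B"
    using insert.prems(1) by (simp add: psd_matrix_def)
  have col: "B $ i $ a = B $ a $ i" for i
    by (subst (1) sym[symmetric]) (simp add: transpose_def)
  consider "B $ a $ a = 0" | "0 < B $ a $ a"
    using psd_matrix_diag_nonneg[OF insert.prems(1), of a] by linarith
  then show ?case
  proof cases
    case 1
    then have "B $ a = 0"
      by (rule psd_matrix_zero_diag_imp_zero_row[OF insert.prems(1)])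
    then have "\<forall>i. i \<notin> S \<longrightarrow> B $ i = 0"
      using insert.prems(2) by auto
    then show ?thesis
      by (rule insert.IH[OF insert.prems(1)])
  next
    case 2
    define r where "r = B $ a"
    define B' where "B' = B - (1 / B $ a $ a) *\<^sub>R outer_prod r r"
    have "psd_matrix B'"
      unfolding B'_def r_def using psd_matrix_eliminate[OF insert.prems(1) 2] .
    moreover have "\<forall>i. i \<notin> S \<longrightarrow> B' $ i = 0"
    proof (intro allI impI)
      fix i assume "i \<notin> S"
      show "B' $ i = 0"
      proof (cases "i = a")
        case True
        then show ?thesis
          using 2 by (simp add: B'_def r_def outer_prod_def vec_eq_iff)
      next
        case False
        then have "B $ i = 0" and "r $ i = 0"
          using insert.prems(2) \<open>i \<notin> S\<close> col[of i] by (auto simp: r_def vec_eq_iff)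
        then show ?thesis
          by (simp add: B'_def outer_prod_def vec_eq_iff)
      qed
    qed
    ultimately have "0 \<le> trace (A ** B')"
      by (rule insert.IH)
    moreover have "0 \<le> r \<bullet> (A *v r) / B $ a $ a"
      using A 2 by (simp add: psd_matrix_def)
    moreover have "trace (A ** B) = trace (A ** B') + r \<bullet> (A *v r) / B $ a $ a"
    proof -
      have "A ** B = A ** B' + A ** ((1 / B $ a $ a) *\<^sub>R outer_prod r r)"
        unfolding matrix_add_ldistrib[symmetric] B'_def by simp
      then show ?thesis
        by (simp add: matrix_scalar_ac scalar_matrix_assoc[symmetric]
            trace_add trace_scaleR trace_mult_outer_prod)
    qed
    ultimately show ?thesis
      by linarith
  qed
qed

lemma trace_mult_psd_nonneg:
  assumes "psd_matrix A" and "psd_matrix B"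
  shows "0 \<le> trace (A ** B)"
  by (rule trace_mult_psd_nonneg_supported[where S = UNIV, OF assms(1) _ assms(2)]) simp_all

lemma psd_matrix_congruence:
  assumes "psd_matrix H"
  shows "psd_matrix (transpose X ** H ** X)"
proof -
  have "x \<bullet> ((transpose X ** H ** X) *v x) = (X *v x) \<bullet> (H *v (X *v x))" for x
  proof -
    have "x \<bullet> ((transpose X ** H ** X) *v x) = ((H *v (X *v x)) v* X) \<bullet> x"
      by (simp add: matrix_vector_mul_assoc[symmetric] inner_commute)
    also have "\<dots> = (H *v (X *v x)) \<bullet> (X *v x)"
      by (rule dot_lmul_matrix)
    also have "\<dots> = (X *v x) \<bullet> (H *v (X *v x))"
      by (rule inner_commute)
    finally show ?thesis .
  qed
  then show ?thesis
    using assms by (simp add: psd_matrix_def matrix_transpose_mul matrix_mul_assoc)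
qed

lemma trace_conjugate_mult:
  fixes X :: "'a::comm_semiring_1^'m^'n"
  shows "trace (X ** M ** transpose X ** H) = trace (M ** (transpose X ** H ** X))"
proof -
  have "trace (X ** M ** transpose X ** H) = trace (X ** (M ** transpose X ** H))"
    by (simp add: matrix_mul_assoc)
  also have "\<dots> = trace ((M ** transpose X ** H) ** X)"
    by (rule trace_mul_sym)
  finally show ?thesis
    by (simp add: matrix_mul_assoc)
qed

lemma Inf_perturbation_tendsto:
  fixes g h :: "'a \<Rightarrow> real"
  assumes G: "G \<noteq> {}" and bdd: "bdd_below (g ` G)" and h: "\<And>x. x \<in> G \<Longrightarrow> 0 \<le> h x"
  shows "((\<lambda>e. Inf ((\<lambda>x. g x + e * h x) ` G)) \<longlongrightarrow> Inf (g ` G)) (at_right 0)"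
proof -
  have lower: "Inf (g ` G) \<le> g x + e * h x" if "x \<in> G" "0 \<le> e" for x e
    using cINF_lower[OF bdd that(1)] h[OF that(1)] that(2) by (simp add: add_increasing2)
  show ?thesis
  proof (rule order_tendstoI)
    fix a assume "a < Inf (g ` G)"
    have "a < Inf ((\<lambda>x. g x + e * h x) ` G)" if "0 < e" for e
    proof -
      have "Inf (g ` G) \<le> Inf ((\<lambda>x. g x + e * h x) ` G)"
        using that by (intro cINF_greatest[OF G] lower) auto
      then show ?thesis
        using \<open>a < Inf (g ` G)\<close> by linarith
    qed
    then show "eventually (\<lambda>e. a < Inf ((\<lambda>x. g x + e * h x) ` G)) (at_right 0)"
      by (intro eventually_mono[OF eventually_at_right_less])
  next
    fix b assume "Inf (g ` G) < b"
    then obtain x where x: "x \<in> G" "g x < b"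
      using cINF_less_iff[OF G bdd] by blast
    define c where "c = (b - g x) / (h x + 1)"
    have hx: "0 \<le> h x"
      using h[OF x(1)] .
    have "0 < c"
      using x(2) hx by (simp add: c_def)
    moreover have "Inf ((\<lambda>x. g x + e * h x) ` G) < b" if "0 < e" "e < c" for e
    proof -
      have "bdd_below ((\<lambda>x. g x + e * h x) ` G)"
        using that(1) by (intro bdd_belowI2[where m = "Inf (g ` G)"] lower) auto
      then have "Inf ((\<lambda>x. g x + e * h x) ` G) \<le> g x + e * h x"
        using x(1) by (rule cINF_lower)
      moreover have "e * h x \<le> e * (h x + 1)"
        using that(1) by simp
      also have "\<dots> < c * (h x + 1)"
        using that(2) hx by (intro mult_strict_right_mono) auto
      also have "\<dots> = b - g x"
        using hx by (simp add: c_def)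
      ultimately show ?thesis
        by linarith
    qed
    ultimately show "eventually (\<lambda>e. Inf ((\<lambda>x. g x + e * h x) ` G) < b) (at_right 0)"
      unfolding eventually_at_right_field by blast
  qed
qed

lemma psd_mat_imp_psd_matrix: "psd_mat A \<Longrightarrow> psd_matrix A"
  by (simp add: psd_mat_def psd_matrix_def)

lemma pd_mat_imp_psd_matrix:
  assumes "pd_mat A"
  shows "psd_matrix A"
  unfolding psd_matrix_def
proof (intro conjI allI)
  show "transpose A = A"
    using assms by (simp add: pd_mat_def)
  show "0 \<le> x \<bullet> (A *v x)" for x
    using assms unfolding pd_mat_def by (metis inner_zero_left order.strict_implies_order order_refl)
qed

lemma psd_matrix_mat_1: "psd_matrix (mat 1)"
  by (simp add: psd_matrix_def)

theorem mainTheorem4: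
  fixes V H :: "'n::finite sqmat" and G :: "'n sqmat set"
  assumes "psd_mat V" and "pd_mat H"
    and "G = SL_grp \<or> G = Sp_grp"
  shows "((\<lambda>\<epsilon>::real. Inf {trace (X ** (V + \<epsilon> *\<^sub>R mat 1) ** transpose X ** H) | X. X \<in> G})
          \<longlongrightarrow> Inf {trace (X ** V ** transpose X ** H) | X. X \<in> G}) (at_right 0)"
proof -
  define K where "K X = transpose X ** H ** X" for X :: "'n sqmat"
  have K: "psd_matrix (K X)" for X
    unfolding K_def by (rule psd_matrix_congruence[OF pd_mat_imp_psd_matrix[OF assms(2)]])
  have perturbed: "{trace (X ** (V + \<epsilon> *\<^sub>R mat 1) ** transpose X ** H) | X. X \<in> G}
      = (\<lambda>X. trace (V ** K X) + \<epsilon> * trace (K X)) ` G" for \<epsilon>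
    by (auto simp: K_def trace_conjugate_mult trace_add_scaled_id_mult)
  have unperturbed: "{trace (X ** V ** transpose X ** H) | X. X \<in> G} = (\<lambda>X. trace (V ** K X)) ` G"
    by (auto simp: K_def trace_conjugate_mult)
  have "mat 1 \<in> G"
    using assms(3) by (auto simp: SL_grp_def Sp_grp_def)
  moreover have "bdd_below ((\<lambda>X. trace (V ** K X)) ` G)"
    by (rule bdd_belowI2[where m = 0]) (rule trace_mult_psd_nonneg[OF psd_mat_imp_psd_matrix[OF assms(1)] K])
  moreover have "0 \<le> trace (K X)" for X
    using trace_mult_psd_nonneg[OF psd_matrix_mat_1 K] by simp
  ultimately show ?thesis
    unfolding perturbed unperturbed by (intro Inf_perturbation_tendsto) auto
qed

end
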